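(* Consider the two-player Tower of Hanoi game under normal play on $l\ge4$ pegs. If $n=2$, the game is a draw for the ending conditions (EC1), (EC2), (EC3), and the first player (Anh) wins for (EC4) and (EC5). If $n=1$, the first player wins (in her first move) for (EC1), (EC4), (EC5).
   Context: Tower of Hanoi on $l$ pegs (labeled $1,\dots,l$) with $n$ disks of pairwise distinct sizes: a position assigns each disk to a peg, disks on each peg stacked with sizes decreasing from bottom to top. A legal move transfers the top disk of one peg to a different peg that is empty or has a larger top disk. A tower position is one with all disks on one peg. Two-player game: Anh (first player) and Bao (second player) alternate moves starting from the position with all disks on Peg 1; a player may not move the disk that the opponent moved in the immediately preceding move. The game ends when the tower has been transferred to a final peg, according to one fixed ending condition: (EC1) all disks on a given peg distinct from Peg 1; (EC2) all disks on Peg 1, the largest disk having been moved at least once; (EC3) all disks on Peg 1, the smallest disk having been moved at least once; (EC4) all disks on any peg, the largest disk having been moved at least once; (EC5) all disks on any peg, the smallest disk having been moved at least once. A move creating a tower position that does not end the game (tower on a non-final peg) is not allowed. Normal play: the player who makes the last (game-ending) move wins; if neither player can force a win, the game is a draw. *)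

theory Defs
  imports Main
begin

text \<open>Disks are 0,...,n-1 (disk 0 smallest, disk n-1 largest); pegs are 1,...,l.
  A configuration c maps each disk to its peg (values at d >= n are irrelevant).
  A game state records the configuration, the disk moved in the preceding move,
  and whether the largest / smallest disk has been moved at least once.\<close>

datatype ending_condition = EC1 nat | EC2 | EC3 | EC4 | EC5

type_synonym hstate = "(nat \<Rightarrow> nat) \<times> nat option \<times> bool \<times> bool"

definition legal_move :: "nat \<Rightarrow> nat \<Rightarrow> (nat \<Rightarrow> nat) \<Rightarrow> nat \<Rightarrow> nat \<Rightarrow> bool" where
  "legal_move n l c d q \<longleftrightarrow>
     d < n \<and> q \<in> {1..l} \<and> q \<noteq> c d \<and>
     (\<forall>e<d. c e \<noteq> c d) \<and> (\<forall>e<d. c e \<noteq> q)"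

definition is_tower :: "nat \<Rightarrow> (nat \<Rightarrow> nat) \<Rightarrow> bool" where
  "is_tower n c \<longleftrightarrow> (\<exists>p. \<forall>d<n. c d = p)"

definition do_move :: "nat \<Rightarrow> hstate \<Rightarrow> nat \<Rightarrow> nat \<Rightarrow> hstate" where
  "do_move n s d q = (case s of (c, lst, bm, sm) \<Rightarrow>
      (c(d := q), Some d, bm \<or> d = n - 1, sm \<or> d = 0))"

definition game_ends :: "ending_condition \<Rightarrow> nat \<Rightarrow> hstate \<Rightarrow> bool" where
  "game_ends ec n s = (case s of (c, lst, bm, sm) \<Rightarrow>
     (case ec of
        EC1 f \<Rightarrow> (\<forall>d<n. c d = f)
      | EC2 \<Rightarrow> (\<forall>d<n. c d = 1) \<and> bm
      | EC3 \<Rightarrow> (\<forall>d<n. c d = 1) \<and> sm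
      | EC4 \<Rightarrow> is_tower n c \<and> bm
      | EC5 \<Rightarrow> is_tower n c \<and> sm))"

definition allowed :: "ending_condition \<Rightarrow> nat \<Rightarrow> nat \<Rightarrow> hstate \<Rightarrow> nat \<Rightarrow> nat \<Rightarrow> bool" where
  "allowed ec n l s d q \<longleftrightarrow>
     legal_move n l (fst s) d q \<and> fst (snd s) \<noteq> Some d \<and>
     (is_tower n (fst (do_move n s d q)) \<longrightarrow> game_ends ec n (do_move n s d q))"

inductive can_force_win :: "ending_condition \<Rightarrow> nat \<Rightarrow> nat \<Rightarrow> hstate \<Rightarrow> bool"
  for ec n l where
  "allowed ec n l s d q \<Longrightarrow>
   (game_ends ec n (do_move n s d q) \<or>
    (\<forall>d' q'. allowed ec n l (do_move n s d q) d' q' \<longrightarrow>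
        \<not> game_ends ec n (do_move n (do_move n s d q) d' q') \<and>
        can_force_win ec n l (do_move n (do_move n s d q) d' q'))) \<Longrightarrow>
   can_force_win ec n l s"

definition init_state :: hstate where
  "init_state = ((\<lambda>_. 1), None, False, False)"

definition first_player_wins :: "ending_condition \<Rightarrow> nat \<Rightarrow> nat \<Rightarrow> bool" where
  "first_player_wins ec n l \<longleftrightarrow> can_force_win ec n l init_state"

definition second_player_wins :: "ending_condition \<Rightarrow> nat \<Rightarrow> nat \<Rightarrow> bool" where
  "second_player_wins ec n l \<longleftrightarrow>
     (\<forall>d q. allowed ec n l init_state d q \<longrightarrow>
        \<not> game_ends ec n (do_move n init_state d q) \<and>
        can_force_win ec n l (do_move n init_state d q))"

definition is_draw :: "ending_condition \<Rightarrow> nat \<Rightarrow> nat \<Rightarrow> bool" where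
  "is_draw ec n l \<longleftrightarrow> \<not> first_player_wins ec n l \<and> \<not> second_player_wins ec n l"

definition wins_first_move :: "ending_condition \<Rightarrow> nat \<Rightarrow> nat \<Rightarrow> bool" where
  "wins_first_move ec n l \<longleftrightarrow>
     (\<exists>d q. allowed ec n l init_state d q \<and> game_ends ec n (do_move n init_state d q))"

end

theory Submission
  imports Defs
begin

text \<open>With two disks and at least four pegs, a player who cannot win at once can always answer
  with a move that keeps the game in a harmless shape. If the smallest disk was just moved and the
  disks lie apart, the mover must move the largest disk onto a free peg, and the reply puts the
  smallest disk on a third peg. If the largest disk was just moved and is off the final peg, the
  mover must move the smallest disk, not onto the largest one (that tower would not end the game),
  and the reply puts the largest disk on a peg avoiding the final peg and both current pegs. So for
  (EC1)-(EC3) neither player can force a win. For (EC4) and (EC5) the final peg is free: after the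
  smallest disk moves away, the largest disk must follow to a free peg and the smallest disk lands
  on it. With one disk the first move already ends the game.\<close>

lemma ex_peg_avoiding:
  fixes l :: nat
  assumes "finite A" "card A < l"
  shows "\<exists>q\<in>{1..l}. q \<notin> A"
proof (rule ccontr)
  assume "\<not> ?thesis"
  then have "card {1..l} \<le> card A" by (intro card_mono[OF assms(1)]) auto
  with assms(2) show False by simp
qed

lemma ex_peg_avoiding3:
  fixes l :: nat
  assumes "4 \<le> l"
  obtains q where "q \<in> {1..l}" "q \<noteq> a" "q \<noteq> b" "q \<noteq> c"
proof -
  have "card {a, b, c} < l"
    using assms by (auto simp: card_insert_if)
  then show thesis using ex_peg_avoiding[of "{a, b, c}" l] that by auto
qed

lemma game_ends_is_tower: "game_ends ec n s \<Longrightarrow> is_tower n (fst s)"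
  unfolding game_ends_def is_tower_def by (cases s; cases ec; auto)

lemma is_tower_two_disks: "is_tower 2 c \<longleftrightarrow> c 0 = c 1"
  unfolding is_tower_def by (auto simp: less_2_cases_iff intro: exI[of _ "c 0"])

lemma legal_move_two_disks:
  "legal_move 2 l c d q \<longleftrightarrow>
     (d = 0 \<or> d = 1) \<and> q \<in> {1..l} \<and> q \<noteq> c d \<and> (d = 1 \<longrightarrow> c 0 \<noteq> c 1 \<and> c 0 \<noteq> q)"
  unfolding legal_move_def by (auto simp: less_2_cases_iff less_Suc_eq)

lemma first_player_wins_if_wins_first_move:
  "wins_first_move ec n l \<Longrightarrow> first_player_wins ec n l"
  unfolding wins_first_move_def first_player_wins_def by (blast intro: can_force_win.intros)

lemma not_can_force_win_if_defensible:
  assumes defend: "\<And>s d q. P s \<Longrightarrow> allowed ec n l s d q \<Longrightarrow>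
      \<not> game_ends ec n (do_move n s d q) \<and>
      (\<exists>d' q'. allowed ec n l (do_move n s d q) d' q' \<and> P (do_move n (do_move n s d q) d' q'))"
    and "can_force_win ec n l s"
  shows "\<not> P s"
  using assms(2)
proof (induction rule: can_force_win.induct)
  case (1 s d q)
  show ?case
  proof
    assume "P s"
    with defend[OF this 1(1)] 1(2) show False by blast
  qed
qed

definition small_moved_apart :: "hstate \<Rightarrow> bool" where
  "small_moved_apart s \<longleftrightarrow> fst (snd s) = Some 0 \<and> fst s 0 \<noteq> fst s 1"

text \<open>The initial position belongs here because there the largest disk is covered, so the
  mover must move the smallest disk, just as after a move of the largest disk.\<close>
definition large_moved_off :: "nat \<Rightarrow> hstate \<Rightarrow> bool" where
  "large_moved_off g s \<longleftrightarrow> s = init_state \<or> (fst (snd s) = Some 1 \<and> fst s 1 \<noteq> g)"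

lemma small_moved_apart_not_can_force_win:
  assumes "4 \<le> l" "small_moved_apart s"
  shows "\<not> can_force_win ec 2 l s"
  using assms(2)
proof (rule contrapos_pn[OF _ not_can_force_win_if_defensible])
  fix s d q
  assume inv: "small_moved_apart s" and mv: "allowed ec 2 l s d q"
  obtain c lst bm sm where s: "s = (c, lst, bm, sm)" by (cases s)
  from mv inv s have d: "d = 1" and q: "q \<noteq> c 0"
    by (auto simp: allowed_def legal_move_two_disks small_moved_apart_def)
  have s1: "do_move 2 s d q = (c(1 := q), Some 1, True, sm)"
    using s d by (simp add: do_move_def)
  obtain q' where q': "q' \<in> {1..l}" "q' \<noteq> c 0" "q' \<noteq> q" "q' \<noteq> c 1"
    using ex_peg_avoiding3[OF assms(1)] by blast
  have "allowed ec 2 l (do_move 2 s d q) 0 q'"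
    using q q' s1 by (auto simp: allowed_def legal_move_two_disks do_move_def is_tower_two_disks)
  moreover have "small_moved_apart (do_move 2 (do_move 2 s d q) 0 q')"
    using s1 q' by (simp add: do_move_def small_moved_apart_def)
  moreover have "\<not> game_ends ec 2 (do_move 2 s d q)"
    using s1 q game_ends_is_tower[of ec 2 "do_move 2 s d q"] by (auto simp: is_tower_two_disks)
  ultimately show "\<not> game_ends ec 2 (do_move 2 s d q) \<and> (\<exists>d' q'. allowed ec 2 l (do_move 2 s d q) d' q'
      \<and> small_moved_apart (do_move 2 (do_move 2 s d q) d' q'))" by blast
qed

lemma large_moved_off_not_can_force_win:
  assumes "4 \<le> l" "large_moved_off g s"
    and ends_on_g: "\<And>s. game_ends ec 2 s \<Longrightarrow> fst s 0 = g \<and> fst s 1 = g"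
  shows "\<not> can_force_win ec 2 l s"
  using assms(2)
proof (rule contrapos_pn[OF _ not_can_force_win_if_defensible])
  fix s d q
  assume inv: "large_moved_off g s" and mv: "allowed ec 2 l s d q"
  obtain c lst bm sm where s: "s = (c, lst, bm, sm)" by (cases s)
  from mv inv s have d: "d = 0" and q: "q \<noteq> c 0"
    by (auto simp: allowed_def legal_move_two_disks large_moved_off_def init_state_def)
  have s1: "do_move 2 s d q = (c(0 := q), Some 0, bm, True)"
    using s d by (simp add: do_move_def)
  have q_off_large: "q \<noteq> c 1"
  proof
    assume "q = c 1"
    then have "game_ends ec 2 (do_move 2 s d q)"
      using mv s1 by (simp add: allowed_def is_tower_two_disks)
    from ends_on_g[OF this] have "q = g" "c 1 = g" using s1 by auto
    with inv s q show False by (auto simp: large_moved_off_def init_state_def)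
  qed
  obtain q' where q': "q' \<in> {1..l}" "q' \<noteq> g" "q' \<noteq> q" "q' \<noteq> c 1"
    using ex_peg_avoiding3[OF assms(1)] by blast
  have "allowed ec 2 l (do_move 2 s d q) 1 q'"
    using q' q_off_large s1 by (auto simp: allowed_def legal_move_two_disks do_move_def is_tower_two_disks)
  moreover have "large_moved_off g (do_move 2 (do_move 2 s d q) 1 q')"
    using s1 q' by (simp add: do_move_def large_moved_off_def)
  moreover have "\<not> game_ends ec 2 (do_move 2 s d q)"
    using s1 q_off_large game_ends_is_tower[of ec 2 "do_move 2 s d q"] by (auto simp: is_tower_two_disks)
  ultimately show "\<not> game_ends ec 2 (do_move 2 s d q) \<and> (\<exists>d' q'. allowed ec 2 l (do_move 2 s d q) d' q'
      \<and> large_moved_off g (do_move 2 (do_move 2 s d q) d' q'))" by blast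
qed

lemma not_second_player_wins_two_disks:
  assumes "4 \<le> l"
  shows "\<not> second_player_wins ec 2 l"
proof -
  have "allowed ec 2 l init_state 0 2"
    using assms by (simp add: allowed_def legal_move_two_disks init_state_def do_move_def is_tower_two_disks)
  moreover have "small_moved_apart (do_move 2 init_state 0 2)"
    by (simp add: small_moved_apart_def do_move_def init_state_def)
  ultimately show ?thesis
    using small_moved_apart_not_can_force_win[OF assms] unfolding second_player_wins_def by blast
qed

lemma is_draw_two_disks:
  assumes "4 \<le> l" "\<And>s. game_ends ec 2 s \<Longrightarrow> fst s 0 = g \<and> fst s 1 = g"
  shows "is_draw ec 2 l"
  using large_moved_off_not_can_force_win[OF assms(1) _ assms(2), of init_state]
    not_second_player_wins_two_disks[OF assms(1)]
  by (simp add: is_draw_def first_player_wins_def large_moved_off_def)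

lemma first_player_wins_two_disks_any_peg:
  assumes "4 \<le> l" "ec = EC4 \<or> ec = EC5"
  shows "first_player_wins ec 2 l"
  unfolding first_player_wins_def
proof (rule can_force_win.intros)
  show "allowed ec 2 l init_state 0 2"
    using assms(1) by (simp add: allowed_def legal_move_two_disks init_state_def do_move_def is_tower_two_disks)
  let ?s = "do_move 2 init_state 0 2"
  have s: "?s = ((\<lambda>_. 1)(0 := 2), Some 0, False, True)"
    by (simp add: do_move_def init_state_def)
  show "game_ends ec 2 ?s \<or> (\<forall>d' q'. allowed ec 2 l ?s d' q' \<longrightarrow>
      \<not> game_ends ec 2 (do_move 2 ?s d' q') \<and> can_force_win ec 2 l (do_move 2 ?s d' q'))"
  proof (intro disjI2 allI impI conjI)
    fix d' q'
    assume "allowed ec 2 l ?s d' q'"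
    then have d': "d' = 1" and q': "q' \<in> {1..l}" "q' \<noteq> 2" "q' \<noteq> 1"
      using s by (auto simp: allowed_def legal_move_two_disks)
    have s2: "do_move 2 ?s d' q' = ((\<lambda>_. 1)(0 := 2, 1 := q'), Some 1, True, True)"
      using s d' by (simp add: do_move_def)
    show "\<not> game_ends ec 2 (do_move 2 ?s d' q')"
      using game_ends_is_tower[of ec 2 "do_move 2 ?s d' q'"] s2 q' by (auto simp: is_tower_two_disks)
    have ends: "game_ends ec 2 (do_move 2 (do_move 2 ?s d' q') 0 q')"
      using s2 assms(2) by (auto simp: game_ends_def do_move_def is_tower_two_disks)
    moreover have "allowed ec 2 l (do_move 2 ?s d' q') 0 q'"
      using s2 q' ends by (simp add: allowed_def legal_move_two_disks)
    ultimately show "can_force_win ec 2 l (do_move 2 ?s d' q')"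
      by (blast intro: can_force_win.intros)
  qed
qed

lemma wins_first_move_one_disk:
  assumes "f \<in> {2..l}" "ec = EC1 f \<or> ec = EC4 \<or> ec = EC5"
  shows "wins_first_move ec 1 l"
proof -
  have "allowed ec 1 l init_state 0 f \<and> game_ends ec 1 (do_move 1 init_state 0 f)"
    using assms by (auto simp: allowed_def legal_move_def init_state_def do_move_def
        game_ends_def is_tower_def)
  then show ?thesis unfolding wins_first_move_def by blast
qed

theorem mainTheorem5:
  fixes l :: nat
  assumes "l \<ge> 4"
  shows "(\<forall>f\<in>{2..l}. is_draw (EC1 f) 2 l) \<and> is_draw EC2 2 l \<and> is_draw EC3 2 l \<and>
         first_player_wins EC4 2 l \<and> first_player_wins EC5 2 l \<and>
         (\<forall>f\<in>{2..l}. first_player_wins (EC1 f) 1 l \<and> wins_first_move (EC1 f) 1 l) \<and>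
         first_player_wins EC4 1 l \<and> wins_first_move EC4 1 l \<and>
         first_player_wins EC5 1 l \<and> wins_first_move EC5 1 l"
proof -
  have one_disk: "first_player_wins ec 1 l \<and> wins_first_move ec 1 l"
    if "f \<in> {2..l}" "ec = EC1 f \<or> ec = EC4 \<or> ec = EC5" for ec f
    using wins_first_move_one_disk[OF that] first_player_wins_if_wins_first_move by blast
  have "\<forall>f\<in>{2..l}. is_draw (EC1 f) 2 l"
    by (intro ballI is_draw_two_disks[OF assms]) (auto simp: game_ends_def)
  moreover have "is_draw EC2 2 l" "is_draw EC3 2 l"
    by (rule is_draw_two_disks[OF assms, of _ 1], auto simp: game_ends_def)+
  moreover have "first_player_wins EC4 2 l" "first_player_wins EC5 2 l"
    using first_player_wins_two_disks_any_peg[OF assms] by auto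
  moreover have "\<forall>f\<in>{2..l}. first_player_wins (EC1 f) 1 l \<and> wins_first_move (EC1 f) 1 l"
    using one_disk by blast
  moreover have "first_player_wins EC4 1 l \<and> wins_first_move EC4 1 l"
    "first_player_wins EC5 1 l \<and> wins_first_move EC5 1 l"
    using one_disk[of 2 EC4] one_disk[of 2 EC5] assms by simp_all
  ultimately show ?thesis by blast
qed

end
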